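(* (Model B) Let $u\in\mathbb{R}^d$. For all sufficiently small $\beta>0$, every finite $\Lambda\subset\mathbb{Z}^d$ and every $\omega$ for which the bounds $As^2-B^\omega_{(x,y)}\le V^\omega_{(x,y)}(s)\le C_2s^2$ hold, $$F_{\beta,u,\Lambda}[\omega_\Lambda]\le-|\Lambda|\big(\sigma^{A-\beta}_\Lambda-\sigma^{C_2}_\Lambda\big)+\sum_{x,y\in\Lambda\cup\partial\Lambda,|x-y|=1}B^\omega_{(x,y)}-\frac{A-\beta-C_2}{2}\sum_{x,y\in\Lambda\cup\partial\Lambda,|x-y|=1}((x-y)\cdot u)^2.$$
   Context: Model B: for each nearest-neighbour bond $(x,y)$ of $\mathbb{Z}^d$ there is a random function $V^\omega_{(x,y)}:\mathbb{R}\to\mathbb{R}$, jointly measurable in $(\omega,s)$, i.i.d. over bonds, and for each $\omega$, $V^\omega_{(x,y)}\in C^2(\mathbb{R})$ is even. $(B^\omega_{(x,y)})$ are i.i.d. real random variables with $\mathbb{E}|B_{(x,y)}|<\infty$, and for $\mathbb P$-a.e. $\omega$, $As^2-B^\omega_{(x,y)}\le V^\omega_{(x,y)}(s)\le C_2s^2$ for all $s$ and all bonds (fixed $A,C_2>0$). For finite $\Lambda$, $\partial\Lambda=\{x\notin\Lambda:\|x-y\|_1=1\text{ for some }y\in\Lambda\}$; sums over "$x,y$ with $|x-y|=1$" are over ordered nearest-neighbour pairs. For $\psi\in\mathbb{R}^{\mathbb{Z}^d}$, $H^\psi_\Lambda[\omega](\phi)=\frac12\sum_{x,y\in\Lambda,|x-y|=1}V^\omega_{(x,y)}(\phi(x)-\phi(y))+\sum_{x\in\Lambda,y\in\partial\Lambda,|x-y|=1}V^\omega_{(x,y)}(\phi(x)-\psi(y))$,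 and $\nu^\psi_\Lambda[\omega](\mathrm{d}\phi)=\frac1Ze^{-H^\psi_\Lambda[\omega](\phi)}\prod_{x\in\Lambda}\mathrm{d}\phi(x)\prod_{x\notin\Lambda}\delta_{\psi(x)}(\mathrm{d}\phi(x))$. With $\psi_u(x)=x\cdot u$, $$F_{\beta,u,\Lambda}[\omega_\Lambda]=\log\int\nu^{\psi_u}_\Lambda[\omega](\mathrm{d}\phi)\exp\Big(\frac\beta2\sum_{x,y\in\mathbb{Z}^d,|x-y|=1}(\phi(x)-\phi(y)-u\cdot(x-y))^2\Big).$$ For $c>0$, $\sigma^c_\Lambda=-\frac1{|\Lambda|}\log\int_{\mathbb{R}^\Lambda}\exp\big(-\frac c2\sum_{x,y\in\Lambda,|x-y|=1}(\phi(x)-\phi(y))^2-c\sum_{x\in\Lambda,y\in\partial\Lambda,|x-y|=1}\phi(x)^2\big)\prod_{x\in\Lambda}\mathrm{d}\phi(x)$ (the surface tension of the nonrandom model with potential $V(s)=cs^2$, tilt $0$). *)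

theory Defs
  imports "HOL-Probability.Probability"
begin

type_synonym 'd site = "int ^ 'd"

definition nn :: "'d::finite site \<Rightarrow> 'd site \<Rightarrow> bool" where
  "nn x y \<longleftrightarrow> (\<Sum>i\<in>UNIV. \<bar>x $ i - y $ i\<bar>) = 1"

definition bdry :: "'d::finite site set \<Rightarrow> 'd site set" where
  "bdry \<Lambda> = {x. x \<notin> \<Lambda> \<and> (\<exists>y\<in>\<Lambda>. nn x y)}"

definition sdot :: "'d::finite site \<Rightarrow> real ^ 'd \<Rightarrow> real" where
  "sdot x u = (\<Sum>i\<in>UNIV. real_of_int (x $ i) * u $ i)"

definition psi_tilt :: "real ^ 'd \<Rightarrow> 'd::finite site \<Rightarrow> real" where
  "psi_tilt u x = sdot x u"

definition ext_cfg :: "'d::finite site set \<Rightarrow> ('d site \<Rightarrow> real) \<Rightarrow> ('d site \<Rightarrow> real) \<Rightarrow> 'd site \<Rightarrow> real" where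
  "ext_cfg \<Lambda> \<psi> \<phi> x = (if x \<in> \<Lambda> then \<phi> x else \<psi> x)"

abbreviation leb_on :: "'d::finite site set \<Rightarrow> ('d site \<Rightarrow> real) measure" where
  "leb_on \<Lambda> \<equiv> PiM \<Lambda> (\<lambda>_. lborel)"

text \<open>Hamiltonian H^psi_Lambda (V is the family of bond potentials for a fixed omega);
  sums are over ordered nearest-neighbour pairs.\<close>
definition Ham :: "('d::finite site \<Rightarrow> 'd site \<Rightarrow> real \<Rightarrow> real) \<Rightarrow> 'd site set
    \<Rightarrow> ('d site \<Rightarrow> real) \<Rightarrow> ('d site \<Rightarrow> real) \<Rightarrow> real" where
  "Ham V \<Lambda> \<psi> \<phi> =
     (1/2) * (\<Sum>(x,y)\<in>{(x,y). x \<in> \<Lambda> \<and> y \<in> \<Lambda> \<and> nn x y}. V x y (\<phi> x - \<phi> y))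
     + (\<Sum>(x,y)\<in>{(x,y). x \<in> \<Lambda> \<and> y \<in> bdry \<Lambda> \<and> nn x y}. V x y (\<phi> x - \<psi> y))"

text \<open>F_{beta,u,Lambda}[omega_Lambda] = log of the expectation under nu^{psi_u}_Lambda of
  exp(beta/2 * sum over all ordered nn pairs of Z^d of (phi(x)-phi(y)-u.(x-y))^2).\<close>
definition Ffun :: "('d::finite site \<Rightarrow> 'd site \<Rightarrow> real \<Rightarrow> real) \<Rightarrow> real \<Rightarrow> real ^ 'd
    \<Rightarrow> 'd site set \<Rightarrow> real" where
  "Ffun V \<beta> u \<Lambda> =
     (let \<psi> = psi_tilt u;
          Z = (\<integral>\<phi>. exp (- Ham V \<Lambda> \<psi> \<phi>) \<partial>leb_on \<Lambda>);
          N = (\<integral>\<phi>. exp (- Ham V \<Lambda> \<psi> \<phi>) *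
                 exp (\<beta> / 2 * (\<Sum>\<^sub>\<infinity>(x,y)\<in>{(x,y). nn x y}.
                   (ext_cfg \<Lambda> \<psi> \<phi> x - ext_cfg \<Lambda> \<psi> \<phi> y - sdot (x - y) u)\<^sup>2)) \<partial>leb_on \<Lambda>)
      in ln (N / Z))"

text \<open>Surface tension sigma^c_Lambda of the Gaussian model V(s) = c s^2 at tilt 0.\<close>
definition sigma :: "real \<Rightarrow> 'd::finite site set \<Rightarrow> real" where
  "sigma c \<Lambda> = - (1 / real (card \<Lambda>)) * ln (\<integral>\<phi>.
      exp (- (c/2) * (\<Sum>(x,y)\<in>{(x,y). x \<in> \<Lambda> \<and> y \<in> \<Lambda> \<and> nn x y}. (\<phi> x - \<phi> y)\<^sup>2)
           - c * (\<Sum>(x,y)\<in>{(x,y). x \<in> \<Lambda> \<and> y \<in> bdry \<Lambda> \<and> nn x y}. (\<phi> x)\<^sup>2)) \<partial>leb_on \<Lambda>)"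

definition C2_fun :: "(real \<Rightarrow> real) \<Rightarrow> bool" where
  "C2_fun f \<longleftrightarrow> (\<exists>f' f''. (\<forall>s. (f has_real_derivative f' s) (at s)) \<and>
      (\<forall>s. (f' has_real_derivative f'' s) (at s)) \<and> continuous_on UNIV f'')"

end

theory Submission
  imports Defs
begin

text \<open>Write a configuration as \<open>\<phi> = \<psi>\<^sub>u + \<zeta>\<close> with \<open>\<zeta>\<close> vanishing off \<open>\<Lambda>\<close>. By the reflection
  symmetry of the lattice the mixed term \<open>\<Sum> (\<zeta> x - \<zeta> y) (u \<cdot> (x - y))\<close> cancels, so the quadratic
  energy of \<open>\<phi>\<close> is the Dirichlet energy of \<open>\<zeta>\<close> plus the energy of the tilt. The bounds
  \<open>A s\<^sup>2 - B \<le> V \<le> C\<^sub>2 s\<^sup>2\<close> sandwich the Hamiltonian between two Gaussian energies: bounding the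
  numerator of \<open>exp F\<close> from above with \<open>A - \<beta>\<close> and the denominator from below with \<open>C\<^sub>2\<close>, and
  shifting \<open>\<phi>\<close> by \<open>\<psi>\<^sub>u\<close> (translation invariance of Lebesgue measure), leaves two Gaussian
  partition functions with zero boundary condition, i.e. surface tensions. A discrete Poincar\'e
  inequality makes these integrals finite. Any \<open>\<beta> < A\<close> works; \<open>A \<le> C\<^sub>2\<close> and \<open>B \<ge> 0\<close> follow from
  the bounds as \<open>s \<rightarrow> \<infinity>\<close> and at \<open>s = 0\<close>.\<close>

lemma nn_sym: "nn x y = nn y x"
  unfolding nn_def by (simp add: abs_minus_commute)

lemma nn_abs_component_le:
  assumes "nn x y"
  shows "\<bar>x $ i - y $ i\<bar> \<le> 1"
proof -
  have "\<bar>x $ i - y $ i\<bar> \<le> (\<Sum>j\<in>UNIV. \<bar>x $ j - y $ j\<bar>)"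
    by (rule member_le_sum) auto
  with assms show ?thesis by (simp add: nn_def)
qed

lemma nn_add_axis: "nn x (x + axis i 1)"
proof -
  have "(\<Sum>j\<in>UNIV. \<bar>x $ j - (x + axis i 1) $ j\<bar>) = (\<Sum>j\<in>UNIV. if j = i then 1 else 0)"
    by (intro sum.cong refl) (simp add: axis_def)
  then show ?thesis by (simp add: nn_def)
qed

lemma finite_vec_box:
  assumes "\<And>i. finite (S i)"
  shows "finite {v :: 'a ^ 'n::finite. \<forall>i. v $ i \<in> S i}"
proof -
  have "{v :: 'a ^ 'n. \<forall>i. v $ i \<in> S i} \<subseteq> vec_lambda ` PiE UNIV S"
  proof
    fix v :: "'a ^ 'n" assume "v \<in> {v. \<forall>i. v $ i \<in> S i}"
    then have "(\<lambda>i. v $ i) \<in> PiE UNIV S" by auto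
    then show "v \<in> vec_lambda ` PiE UNIV S" by (metis image_eqI vector_component_simps(6) vec_lambda_eta)
  qed
  moreover have "finite (PiE UNIV S)" using assms by (intro finite_PiE) auto
  ultimately show ?thesis by (meson finite_surj)
qed

lemma finite_nn_neighbours: "finite {y. nn x y}"
proof -
  have "{y. nn x y} \<subseteq> {y. \<forall>i. y $ i \<in> {x $ i - 1 .. x $ i + 1}}"
  proof (intro subsetI CollectI allI)
    fix y i assume "y \<in> {y. nn x y}"
    then have "\<bar>x $ i - y $ i\<bar> \<le> 1" by (simp add: nn_abs_component_le)
    then show "y $ i \<in> {x $ i - 1 .. x $ i + 1}" by auto
  qed
  then show ?thesis using finite_vec_box[of "\<lambda>i. {x $ i - 1 .. x $ i + 1}"] finite_subset by auto
qed

lemma finite_bdry: "finite \<Lambda> \<Longrightarrow> finite (bdry \<Lambda>)"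
proof -
  assume "finite \<Lambda>"
  have "bdry \<Lambda> \<subseteq> (\<Union>y\<in>\<Lambda>. {x. nn y x})" unfolding bdry_def using nn_sym by auto
  then show ?thesis using \<open>finite \<Lambda>\<close> finite_nn_neighbours finite_subset by blast
qed

lemma sdot_diff: "sdot (x - y) u = sdot x u - sdot y u"
  unfolding sdot_def by (simp add: sum_subtractf left_diff_distrib)

lemma sum_sdot_nn_neighbours: "(\<Sum>y | nn x y. sdot (x - y) u) = 0"
proof -
  define r where "r y = 2 * x - y" for y
  have nn_r: "nn x (r y) = nn x y" for y
    unfolding nn_def r_def by (simp add: abs_minus_commute)
  have "(\<Sum>y | nn x y. sdot (x - y) u) = (\<Sum>y | nn x y. sdot (x - r y) u)"
    by (rule sum.reindex_bij_witness[of _ r r]) (auto simp: nn_r, auto simp: r_def)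
  also have "\<dots> = - (\<Sum>y | nn x y. sdot (x - y) u)"
    by (simp add: sum_negf[symmetric] sdot_diff r_def)
  finally show ?thesis by simp
qed

definition bond_pairs :: "'d::finite site set \<Rightarrow> ('d site \<times> 'd site) set" where
  "bond_pairs \<Lambda> = {(x, y). nn x y \<and> (x \<in> \<Lambda> \<or> y \<in> \<Lambda>)}"

definition bond_energy :: "'d::finite site set \<Rightarrow> ('d site \<Rightarrow> 'd site \<Rightarrow> real) \<Rightarrow> real" where
  "bond_energy \<Lambda> g = (\<Sum>(x, y)\<in>bond_pairs \<Lambda>. g x y) / 2"

definition dirichlet :: "'d::finite site set \<Rightarrow> ('d site \<Rightarrow> real) \<Rightarrow> real" where
  "dirichlet \<Lambda> \<zeta> = bond_energy \<Lambda> (\<lambda>x y. (\<zeta> x - \<zeta> y)\<^sup>2)"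

lemma bond_pairs_subset:
  "bond_pairs \<Lambda> \<subseteq> {(x, y). x \<in> \<Lambda> \<union> bdry \<Lambda> \<and> y \<in> \<Lambda> \<union> bdry \<Lambda> \<and> nn x y}"
  unfolding bond_pairs_def bdry_def by (auto dest: nn_sym[THEN iffD1])

lemma finite_bond_pairs: "finite \<Lambda> \<Longrightarrow> finite (bond_pairs \<Lambda>)"
proof -
  assume "finite \<Lambda>"
  then have "finite ((\<Lambda> \<union> bdry \<Lambda>) \<times> (\<Lambda> \<union> bdry \<Lambda>))" by (simp add: finite_bdry)
  moreover have "bond_pairs \<Lambda> \<subseteq> (\<Lambda> \<union> bdry \<Lambda>) \<times> (\<Lambda> \<union> bdry \<Lambda>)"
    using bond_pairs_subset by blast
  ultimately show ?thesis by (rule finite_subset[rotated])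
qed

lemma sum_bond_pairs_swap:
  "(\<Sum>(x, y)\<in>bond_pairs \<Lambda>. g x y) = (\<Sum>(x, y)\<in>bond_pairs \<Lambda>. g y x)"
  by (rule sum.reindex_bij_witness[of _ prod.swap prod.swap]) (auto simp: bond_pairs_def nn_sym)

lemma bond_energy_add: "bond_energy \<Lambda> (\<lambda>x y. g x y + h x y) = bond_energy \<Lambda> g + bond_energy \<Lambda> h"
  unfolding bond_energy_def by (simp add: sum.distrib case_prod_beta add_divide_distrib)

lemma bond_energy_diff: "bond_energy \<Lambda> (\<lambda>x y. g x y - h x y) = bond_energy \<Lambda> g - bond_energy \<Lambda> h"
  unfolding bond_energy_def by (simp add: sum_subtractf case_prod_beta diff_divide_distrib)

lemma bond_energy_cmult: "bond_energy \<Lambda> (\<lambda>x y. c * g x y) = c * bond_energy \<Lambda> g"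
  unfolding bond_energy_def by (simp add: sum_distrib_left case_prod_beta)

lemma bond_energy_mono:
  "(\<And>x y. nn x y \<Longrightarrow> g x y \<le> h x y) \<Longrightarrow> bond_energy \<Lambda> g \<le> bond_energy \<Lambda> h"
  unfolding bond_energy_def by (intro divide_right_mono sum_mono) (auto simp: bond_pairs_def)

lemma bond_energy_nonneg: "(\<And>x y. nn x y \<Longrightarrow> 0 \<le> g x y) \<Longrightarrow> 0 \<le> bond_energy \<Lambda> g"
  using bond_energy_mono[of "\<lambda>_ _. 0" g \<Lambda>] by (simp add: bond_energy_def)

lemma dirichlet_nonneg: "0 \<le> dirichlet \<Lambda> \<zeta>"
  unfolding dirichlet_def by (rule bond_energy_nonneg) simp

lemma two_bond_energy_le_sum:
  assumes "finite \<Lambda>" and "\<And>x y. nn x y \<Longrightarrow> 0 \<le> g x y"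
  shows "2 * bond_energy \<Lambda> g
           \<le> (\<Sum>(x, y)\<in>{(x, y). x \<in> \<Lambda> \<union> bdry \<Lambda> \<and> y \<in> \<Lambda> \<union> bdry \<Lambda> \<and> nn x y}. g x y)"
proof -
  have "finite ((\<Lambda> \<union> bdry \<Lambda>) \<times> (\<Lambda> \<union> bdry \<Lambda>))" using assms(1) finite_bdry by auto
  then have "finite {(x, y). x \<in> \<Lambda> \<union> bdry \<Lambda> \<and> y \<in> \<Lambda> \<union> bdry \<Lambda> \<and> nn x y}"
    by (rule finite_subset[rotated]) auto
  then show ?thesis
    unfolding bond_energy_def using bond_pairs_subset[of \<Lambda>] assms(2)
    by (simp, intro sum_mono2) auto
qed

lemma mult_bond_energy_le_sum:
  assumes "finite \<Lambda>" and "\<And>x y. nn x y \<Longrightarrow> 0 \<le> g x y" and "0 \<le> k" and "k \<le> k'"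
  shows "k * bond_energy \<Lambda> g
           \<le> k' / 2 * (\<Sum>(x, y)\<in>{(x, y). x \<in> \<Lambda> \<union> bdry \<Lambda> \<and> y \<in> \<Lambda> \<union> bdry \<Lambda> \<and> nn x y}. g x y)"
proof -
  have "0 \<le> bond_energy \<Lambda> g" by (rule bond_energy_nonneg) (rule assms(2))
  then have "k * bond_energy \<Lambda> g \<le> k' * bond_energy \<Lambda> g"
    using assms(3,4) by (intro mult_right_mono) auto
  also have "\<dots> = k' / 2 * (2 * bond_energy \<Lambda> g)" by simp
  also have "\<dots> \<le> k' / 2 * (\<Sum>(x, y)\<in>{(x, y). x \<in> \<Lambda> \<union> bdry \<Lambda> \<and> y \<in> \<Lambda> \<union> bdry \<Lambda> \<and> nn x y}. g x y)"
    using assms(3,4) by (intro mult_left_mono two_bond_energy_le_sum[OF assms(1)]) (auto intro: assms(2))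
  finally show ?thesis .
qed

lemma bond_energy_interior_boundary:
  assumes fin: "finite \<Lambda>" and sym: "\<And>x y. nn x y \<Longrightarrow> g x y = g y x"
  shows "bond_energy \<Lambda> g = 1/2 * (\<Sum>(x, y)\<in>{(x, y). x \<in> \<Lambda> \<and> y \<in> \<Lambda> \<and> nn x y}. g x y)
                           + (\<Sum>(x, y)\<in>{(x, y). x \<in> \<Lambda> \<and> y \<in> bdry \<Lambda> \<and> nn x y}. g x y)"
proof -
  define I where "I = {(x, y). x \<in> \<Lambda> \<and> y \<in> \<Lambda> \<and> nn x y}"
  define E where "E = {(x, y). x \<in> \<Lambda> \<and> y \<in> bdry \<Lambda> \<and> nn x y}"
  have split: "bond_pairs \<Lambda> = I \<union> E \<union> prod.swap ` E"
  proof (intro equalityI subsetI)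
    fix p assume "p \<in> bond_pairs \<Lambda>"
    then obtain x y where p: "p = (x, y)" "nn x y" "x \<in> \<Lambda> \<or> y \<in> \<Lambda>"
      unfolding bond_pairs_def by blast
    consider "x \<in> \<Lambda>" "y \<in> \<Lambda>" | "x \<in> \<Lambda>" "y \<in> bdry \<Lambda>" | "x \<in> bdry \<Lambda>" "y \<in> \<Lambda>"
      using p(2,3) nn_sym[of x y] unfolding bdry_def by blast
    then show "p \<in> I \<union> E \<union> prod.swap ` E"
      using p nn_sym[of x y] unfolding I_def E_def by cases (auto simp: image_iff)
  next
    fix p assume "p \<in> I \<union> E \<union> prod.swap ` E"
    then show "p \<in> bond_pairs \<Lambda>"
      unfolding I_def E_def bond_pairs_def by (auto simp: nn_sym)
  qed
  have "E \<subseteq> \<Lambda> \<times> bdry \<Lambda>" "I \<subseteq> \<Lambda> \<times> \<Lambda>" unfolding E_def I_def by auto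
  then have finE: "finite E" and finI: "finite I"
    using fin finite_bdry[OF fin] by (meson finite_SigmaI finite_subset)+
  have first_bdry: "fst p \<notin> \<Lambda>" if "p \<in> prod.swap ` E" for p
    using that unfolding E_def bdry_def by auto
  have disj: "I \<inter> E = {}" "(I \<union> E) \<inter> prod.swap ` E = {}"
    using first_bdry unfolding I_def E_def bdry_def by fastforce+
  have "(\<Sum>(x, y)\<in>prod.swap ` E. g x y) = (\<Sum>(x, y)\<in>E. g y x)"
    by (subst sum.reindex) (auto simp: case_prod_beta)
  also have "\<dots> = (\<Sum>(x, y)\<in>E. g x y)"
    by (intro sum.cong refl) (auto simp: E_def sym[symmetric])
  finally have swap: "(\<Sum>(x, y)\<in>prod.swap ` E. g x y) = (\<Sum>(x, y)\<in>E. g x y)" .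
  have "(\<Sum>(x, y)\<in>bond_pairs \<Lambda>. g x y)
      = (\<Sum>(x, y)\<in>I. g x y) + (\<Sum>(x, y)\<in>E. g x y) + (\<Sum>(x, y)\<in>prod.swap ` E. g x y)"
    unfolding split using finI finE disj by (simp add: sum.union_disjoint)
  then have "(\<Sum>(x, y)\<in>bond_pairs \<Lambda>. g x y) = (\<Sum>(x, y)\<in>I. g x y) + 2 * (\<Sum>(x, y)\<in>E. g x y)"
    by (simp add: swap)
  then show ?thesis unfolding bond_energy_def I_def E_def by simp
qed

section \<open>The Dirichlet energy\<close>

lemma bond_energy_tilt:
  assumes fin: "finite \<Lambda>" and supp: "\<And>x. x \<notin> \<Lambda> \<Longrightarrow> \<zeta> x = 0"
  shows "bond_energy \<Lambda> (\<lambda>x y. (\<zeta> x - \<zeta> y + sdot (x - y) u)\<^sup>2)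
       = dirichlet \<Lambda> \<zeta> + bond_energy \<Lambda> (\<lambda>x y. (sdot (x - y) u)\<^sup>2)"
proof -
  define c where "c x y = sdot (x - y) u" for x y
  have supp_mem: "\<zeta> x \<noteq> 0 \<Longrightarrow> x \<in> \<Lambda>" for x using supp by blast
  have outgoing: "(\<Sum>(x, y)\<in>bond_pairs \<Lambda>. \<zeta> x * c x y) = 0"
  proof -
    have "(\<Sum>(x, y)\<in>bond_pairs \<Lambda>. \<zeta> x * c x y) = (\<Sum>(x, y)\<in>Sigma \<Lambda> (\<lambda>x. {y. nn x y}). \<zeta> x * c x y)"
      using fin finite_nn_neighbours supp_mem
      by (intro sum.mono_neutral_cong_right finite_bond_pairs) (auto simp: bond_pairs_def)
    also have "\<dots> = (\<Sum>x\<in>\<Lambda>. \<Sum>y | nn x y. \<zeta> x * c x y)"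
      by (rule sum.Sigma[symmetric]) (use fin finite_nn_neighbours in auto)
    also have "\<dots> = (\<Sum>x\<in>\<Lambda>. \<zeta> x * (\<Sum>y | nn x y. c x y))"
      by (simp add: sum_distrib_left)
    finally show ?thesis by (simp add: c_def sum_sdot_nn_neighbours)
  qed
  have incoming: "(\<Sum>(x, y)\<in>bond_pairs \<Lambda>. \<zeta> y * c x y) = - (\<Sum>(x, y)\<in>bond_pairs \<Lambda>. \<zeta> x * c x y)"
    by (subst sum_bond_pairs_swap) (simp add: c_def sdot_diff sum_negf[symmetric] case_prod_beta algebra_simps)
  have "bond_energy \<Lambda> (\<lambda>x y. (\<zeta> x - \<zeta> y) * c x y) = 0"
    unfolding bond_energy_def using outgoing incoming
    by (simp add: left_diff_distrib sum_subtractf case_prod_beta)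
  moreover have "(\<zeta> x - \<zeta> y + c x y)\<^sup>2 = (\<zeta> x - \<zeta> y)\<^sup>2 + (c x y)\<^sup>2 + 2 * ((\<zeta> x - \<zeta> y) * c x y)" for x y
    by (simp add: power2_eq_square algebra_simps)
  ultimately show ?thesis
    unfolding dirichlet_def c_def by (simp add: bond_energy_add bond_energy_cmult)
qed

lemma infsum_nn_pairs_eq_dirichlet:
  assumes fin: "finite \<Lambda>" and supp: "\<And>x. x \<notin> \<Lambda> \<Longrightarrow> \<zeta> x = 0"
  shows "(\<Sum>\<^sub>\<infinity>(x, y)\<in>{(x, y). nn x y}. (\<zeta> x - \<zeta> y)\<^sup>2) = 2 * dirichlet \<Lambda> \<zeta>"
proof -
  have "(\<Sum>\<^sub>\<infinity>(x, y)\<in>{(x, y). nn x y}. (\<zeta> x - \<zeta> y)\<^sup>2) = (\<Sum>\<^sub>\<infinity>(x, y)\<in>bond_pairs \<Lambda>. (\<zeta> x - \<zeta> y)\<^sup>2)"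
    using supp by (intro infsum_cong_neutral) (auto simp: bond_pairs_def, blast)
  also have "\<dots> = 2 * dirichlet \<Lambda> \<zeta>"
    using finite_bond_pairs[OF fin] by (simp add: dirichlet_def bond_energy_def)
  finally show ?thesis .
qed

lemma axis_step_le_dirichlet:
  assumes fin: "finite \<Lambda>" and "x \<in> \<Lambda>"
  shows "(\<zeta> x - \<zeta> (x + axis i 1))\<^sup>2 \<le> 2 * dirichlet \<Lambda> \<zeta>"
proof -
  have "(x, x + axis i 1) \<in> bond_pairs \<Lambda>"
    using assms(2) nn_add_axis by (auto simp: bond_pairs_def)
  then have "(\<lambda>(x, y). (\<zeta> x - \<zeta> y)\<^sup>2) (x, x + axis i 1) \<le> (\<Sum>(x, y)\<in>bond_pairs \<Lambda>. (\<zeta> x - \<zeta> y)\<^sup>2)"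
    using finite_bond_pairs[OF fin] by (intro member_le_sum) auto
  then show ?thesis by (simp add: dirichlet_def bond_energy_def)
qed

lemma sq_le_dirichlet_of_exit:
  assumes fin: "finite \<Lambda>" and supp: "\<And>x. x \<notin> \<Lambda> \<Longrightarrow> \<zeta> x = 0"
    and exit: "x + axis i (int k) \<notin> \<Lambda>"
  shows "(\<zeta> x)\<^sup>2 \<le> 4 ^ Suc k * dirichlet \<Lambda> \<zeta>"
  using exit
proof (induction k arbitrary: x)
  case 0
  then show ?case using supp dirichlet_nonneg[of \<Lambda> \<zeta>] by (simp add: axis_def zero_vec_def[symmetric])
next
  case (Suc k)
  show ?case
  proof (cases "x \<in> \<Lambda>")
    case False
    then show ?thesis using supp dirichlet_nonneg[of \<Lambda> \<zeta>] by simp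
  next
    case True
    define D where "D = dirichlet \<Lambda> \<zeta>"
    have "(x + axis i 1) + axis i (int k) = x + axis i (int (Suc k))"
      by (simp add: vec_eq_iff axis_def)
    then have "(x + axis i 1) + axis i (int k) \<notin> \<Lambda>" using Suc.prems by metis
    then have next_sq: "(\<zeta> (x + axis i 1))\<^sup>2 \<le> 4 ^ Suc k * D"
      using Suc.IH by (simp add: D_def)
    have "(\<zeta> x)\<^sup>2 \<le> 2 * (\<zeta> x - \<zeta> (x + axis i 1))\<^sup>2 + 2 * (\<zeta> (x + axis i 1))\<^sup>2"
      using sum_squares_ge_zero[of "\<zeta> x - 2 * \<zeta> (x + axis i 1)" 0]
      by (simp add: power2_eq_square algebra_simps)
    also have "\<dots> \<le> 4 * D + 2 * (4 ^ Suc k * D)"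
      using axis_step_le_dirichlet[OF fin True, of \<zeta> i] next_sq by (simp add: D_def)
    also have "\<dots> \<le> 4 ^ Suc (Suc k) * D"
      using dirichlet_nonneg[of \<Lambda> \<zeta>] mult_right_mono[of 1 "4 ^ k" D] by (simp add: D_def algebra_simps)
    finally show ?thesis by (simp add: D_def)
  qed
qed

text \<open>A discrete Poincar\'e inequality: walking from \<open>x\<close> along a coordinate axis, one leaves
  the finite set \<open>\<Lambda>\<close> within \<open>card \<Lambda>\<close> steps.\<close>
lemma sum_sq_le_dirichlet:
  fixes \<Lambda> :: "'d::finite site set"
  assumes fin: "finite \<Lambda>" and supp: "\<And>x. x \<notin> \<Lambda> \<Longrightarrow> \<zeta> x = 0"
  shows "(\<Sum>x\<in>\<Lambda>. (\<zeta> x)\<^sup>2) \<le> real (card \<Lambda>) * 4 ^ Suc (card \<Lambda>) * dirichlet \<Lambda> \<zeta>"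
proof -
  obtain i :: 'd where True by blast
  have "(\<zeta> x)\<^sup>2 \<le> 4 ^ Suc (card \<Lambda>) * dirichlet \<Lambda> \<zeta>" if "x \<in> \<Lambda>" for x
  proof -
    have "inj_on (\<lambda>k. x + axis i (int k)) {0..card \<Lambda>}"
      by (auto simp: inj_on_def vec_eq_iff axis_def)
    then have "\<not> (\<lambda>k. x + axis i (int k)) ` {0..card \<Lambda>} \<subseteq> \<Lambda>"
      using card_inj_on_le[OF _ _ fin] by fastforce
    then obtain k where k: "k \<le> card \<Lambda>" "x + axis i (int k) \<notin> \<Lambda>"
      by (auto simp: image_subset_iff)
    have "(\<zeta> x)\<^sup>2 \<le> 4 ^ Suc k * dirichlet \<Lambda> \<zeta>"
      by (rule sq_le_dirichlet_of_exit[OF fin supp k(2)])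
    also have "\<dots> \<le> 4 ^ Suc (card \<Lambda>) * dirichlet \<Lambda> \<zeta>"
      using k(1) dirichlet_nonneg by (intro mult_right_mono power_increasing) auto
    finally show ?thesis .
  qed
  then have "(\<Sum>x\<in>\<Lambda>. (\<zeta> x)\<^sup>2) \<le> (\<Sum>x\<in>\<Lambda>. 4 ^ Suc (card \<Lambda>) * dirichlet \<Lambda> \<zeta>)"
    by (rule sum_mono)
  then show ?thesis by simp
qed

section \<open>Integrals over \<open>\<real>\<^sup>\<Lambda>\<close>\<close>

lemma emeasure_space_leb_on_ne_0:
  fixes \<Lambda> :: "'d::finite site set"
  assumes "finite \<Lambda>"
  shows "emeasure (leb_on \<Lambda>) (space (leb_on \<Lambda>)) \<noteq> 0"
proof -
  interpret product_sigma_finite "\<lambda>_::'d site. lborel :: real measure" by standard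
  have "emeasure (leb_on \<Lambda>) (PiE \<Lambda> (\<lambda>_. UNIV)) = (\<Prod>i\<in>\<Lambda>. emeasure lborel (UNIV :: real set))"
    using emeasure_PiM[OF assms, of "\<lambda>_. UNIV"] by simp
  then show ?thesis by (simp add: space_PiM power_eq_0_iff)
qed

lemma integral_pos_of_pos:
  fixes f :: "'a \<Rightarrow> real"
  assumes "emeasure M (space M) \<noteq> 0" and int: "integrable M f" and pos: "\<And>x. 0 < f x"
  shows "0 < integral\<^sup>L M f"
proof -
  have nonneg: "AE x in M. 0 \<le> f x" using pos by (simp add: less_imp_le)
  have "integral\<^sup>L M f \<noteq> 0"
  proof
    assume "integral\<^sup>L M f = 0"
    then have "AE x in M. f x = 0" using integral_nonneg_eq_0_iff_AE[OF int nonneg] by simp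
    then have "AE x in M. False" using pos by (auto elim: AE_mp simp: less_imp_neq[symmetric])
    then show False using assms(1) by (simp add: ae_filter_eq_bot_iff eventually_False)
  qed
  then show ?thesis using integral_nonneg_AE[OF nonneg] by simp
qed

lemma ln_tilted_ratio_le:
  fixes H Q :: "'a \<Rightarrow> real"
  assumes space: "emeasure M (space M) \<noteq> 0"
    and meas: "H \<in> borel_measurable M" "Q \<in> borel_measurable M"
    and Q_nonneg: "\<And>\<phi>. 0 \<le> Q \<phi>" and \<beta>: "0 \<le> \<beta>"
    and lower: "\<And>\<phi>. a * Q \<phi> - b \<le> H \<phi>" and upper: "\<And>\<phi>. H \<phi> \<le> c * Q \<phi> + d"
    and int_lower: "integrable M (\<lambda>\<phi>. exp (- (a - \<beta>) * Q \<phi>))"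
    and int_upper: "integrable M (\<lambda>\<phi>. exp (- c * Q \<phi>))"
  shows "ln ((\<integral>\<phi>. exp (- H \<phi>) * exp (\<beta> * Q \<phi>) \<partial>M) / (\<integral>\<phi>. exp (- H \<phi>) \<partial>M))
         \<le> b + d + ln (\<integral>\<phi>. exp (- (a - \<beta>) * Q \<phi>) \<partial>M) - ln (\<integral>\<phi>. exp (- c * Q \<phi>) \<partial>M)"
proof -
  define g where "g \<phi> = exp b * exp (- (a - \<beta>) * Q \<phi>)" for \<phi>
  have g_int: "integrable M g" unfolding g_def using int_lower by (rule integrable_mult_right)
  have tilted_le: "exp (- H \<phi>) * exp (\<beta> * Q \<phi>) \<le> g \<phi>" for \<phi>
    using lower[of \<phi>] by (simp add: g_def exp_add[symmetric] algebra_simps)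
  have weight_le: "exp (- H \<phi>) \<le> g \<phi>" for \<phi>
  proof -
    have "a * Q \<phi> \<le> b + (H \<phi> + \<beta> * Q \<phi>)"
      using lower[of \<phi>] mult_nonneg_nonneg[OF \<beta> Q_nonneg[of \<phi>]] by linarith
    then show ?thesis by (simp add: g_def exp_add[symmetric] algebra_simps)
  qed
  have weight_ge: "exp (- d) * exp (- c * Q \<phi>) \<le> exp (- H \<phi>)" for \<phi>
    using upper[of \<phi>] by (simp add: exp_add[symmetric] algebra_simps)
  have tilted_int: "integrable M (\<lambda>\<phi>. exp (- H \<phi>) * exp (\<beta> * Q \<phi>))"
    using tilted_le meas by (intro Bochner_Integration.integrable_bound[OF g_int]) (auto simp: g_def)
  have weight_int: "integrable M (\<lambda>\<phi>. exp (- H \<phi>))"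
    using weight_le meas by (intro Bochner_Integration.integrable_bound[OF g_int]) (auto simp: g_def)
  define N Z Zl Zu where "N = (\<integral>\<phi>. exp (- H \<phi>) * exp (\<beta> * Q \<phi>) \<partial>M)"
    and "Z = (\<integral>\<phi>. exp (- H \<phi>) \<partial>M)" and "Zl = (\<integral>\<phi>. exp (- (a - \<beta>) * Q \<phi>) \<partial>M)"
    and "Zu = (\<integral>\<phi>. exp (- c * Q \<phi>) \<partial>M)"
  have pos: "0 < N" "0 < Z" "0 < Zl" "0 < Zu"
    unfolding N_def Z_def Zl_def Zu_def
    using tilted_int weight_int int_lower int_upper by (auto intro!: integral_pos_of_pos[OF space])
  have "N \<le> exp b * Zl"
    unfolding N_def Zl_def using integral_mono[OF tilted_int g_int tilted_le] by (simp add: g_def)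
  then have "ln N \<le> ln (exp b * Zl)" using pos by simp
  also have "\<dots> = b + ln Zl" using pos by (simp add: ln_mult)
  finally have "ln N \<le> b + ln Zl" .
  moreover have "exp (- d) * Zu \<le> Z"
    unfolding Z_def Zu_def using integral_mono[OF _ weight_int weight_ge] int_upper by simp
  then have "ln (exp (- d) * Zu) \<le> ln Z" using pos by simp
  then have "- d + ln Zu \<le> ln Z" using pos by (simp add: ln_mult)
  ultimately show ?thesis
    unfolding N_def[symmetric] Z_def[symmetric] Zl_def[symmetric] Zu_def[symmetric]
    using pos by (simp add: ln_div)
qed

definition translate :: "'d site set \<Rightarrow> ('d site \<Rightarrow> real) \<Rightarrow> ('d site \<Rightarrow> real) \<Rightarrow> 'd site \<Rightarrow> real" where
  "translate \<Lambda> t \<phi> = restrict (\<lambda>x. \<phi> x - t x) \<Lambda>"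

lemma measurable_translate: "translate \<Lambda> t \<in> measurable (leb_on \<Lambda>) (leb_on \<Lambda>)"
  unfolding translate_def
  by (intro measurable_restrict) (auto intro!: borel_measurable_diff measurable_component_singleton)

lemma emeasure_lborel_translate:
  assumes "A \<in> sets borel"
  shows "emeasure lborel ((\<lambda>s. s - c) -` A) = emeasure lborel (A :: real set)"
proof -
  have "emeasure lborel A = emeasure (distr lborel borel ((+) (- c))) A"
    by (simp add: lborel_distr_plus)
  also have "\<dots> = emeasure lborel ((+) (- c) -` A)"
    using assms by (subst emeasure_distr) auto
  also have "(+) (- c) -` A = (\<lambda>s. s - c) -` A" by auto
  finally show ?thesis by simp
qed

lemma distr_translate_leb_on:
  fixes \<Lambda> :: "'d::finite site set"
  assumes fin: "finite \<Lambda>"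
  shows "distr (leb_on \<Lambda>) (leb_on \<Lambda>) (translate \<Lambda> t) = leb_on \<Lambda>"
proof -
  interpret product_sigma_finite "\<lambda>_::'d site. lborel :: real measure" by standard
  show ?thesis
  proof (rule PiM_eqI[OF fin])
    fix A assume A: "\<And>i. i \<in> \<Lambda> \<Longrightarrow> A i \<in> sets (lborel :: real measure)"
    have shifted: "(\<lambda>s. s - t i) -` A i \<in> sets borel" if "i \<in> \<Lambda>" for i
    proof -
      have "(\<lambda>s::real. s - t i) \<in> borel_measurable borel" by simp
      from measurable_sets[OF this] A[OF that] show ?thesis by simp
    qed
    have preimage: "translate \<Lambda> t -` PiE \<Lambda> A \<inter> space (leb_on \<Lambda>) = PiE \<Lambda> (\<lambda>i. (\<lambda>s. s - t i) -` A i)"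
      by (auto simp: translate_def space_PiM PiE_def extensional_def Pi_def)
    have "emeasure (distr (leb_on \<Lambda>) (leb_on \<Lambda>) (translate \<Lambda> t)) (PiE \<Lambda> A)
        = emeasure (leb_on \<Lambda>) (PiE \<Lambda> (\<lambda>i. (\<lambda>s. s - t i) -` A i))"
      using A fin by (subst emeasure_distr[OF measurable_translate]) (auto simp: preimage intro: sets_PiM_I_finite)
    also have "\<dots> = (\<Prod>i\<in>\<Lambda>. emeasure lborel (A i))"
      using A shifted by (subst emeasure_PiM[OF fin]) (auto intro!: prod.cong emeasure_lborel_translate)
    finally show "emeasure (distr (leb_on \<Lambda>) (leb_on \<Lambda>) (translate \<Lambda> t)) (PiE \<Lambda> A)
        = (\<Prod>i\<in>\<Lambda>. emeasure lborel (A i))" .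
  qed simp
qed

lemma integral_translate:
  fixes \<Lambda> :: "'d::finite site set" and f :: "('d site \<Rightarrow> real) \<Rightarrow> real"
  assumes "finite \<Lambda>" "f \<in> borel_measurable (leb_on \<Lambda>)"
  shows "(\<integral>\<phi>. f (translate \<Lambda> t \<phi>) \<partial>leb_on \<Lambda>) = (\<integral>\<phi>. f \<phi> \<partial>leb_on \<Lambda>)"
  using integral_distr[OF measurable_translate assms(2), of t] distr_translate_leb_on[OF assms(1)]
  by simp

lemma integrable_translate:
  fixes \<Lambda> :: "'d::finite site set" and f :: "('d site \<Rightarrow> real) \<Rightarrow> real"
  assumes "finite \<Lambda>" "f \<in> borel_measurable (leb_on \<Lambda>)" "integrable (leb_on \<Lambda>) f"
  shows "integrable (leb_on \<Lambda>) (\<lambda>\<phi>. f (translate \<Lambda> t \<phi>))"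
  using integrable_distr_eq[OF measurable_translate assms(2), of t] distr_translate_leb_on[OF assms(1)] assms(3)
  by simp

lemma measurable_ext_cfg[measurable]: "(\<lambda>\<phi>. ext_cfg \<Lambda> \<psi> \<phi> x) \<in> borel_measurable (leb_on \<Lambda>)"
  by (cases "x \<in> \<Lambda>") (auto simp: ext_cfg_def intro: measurable_component_singleton)

lemma borel_measurable_bond_energy:
  assumes "\<And>x y. nn x y \<Longrightarrow> (\<lambda>\<phi>. g \<phi> x y) \<in> borel_measurable M"
  shows "(\<lambda>\<phi>. bond_energy \<Lambda> (g \<phi>)) \<in> borel_measurable M"
  unfolding bond_energy_def using assms
  by (intro borel_measurable_divide borel_measurable_sum) (auto simp: bond_pairs_def)

lemma borel_measurable_dirichlet_ext_cfg[measurable]: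
  "(\<lambda>\<phi>. dirichlet \<Lambda> (ext_cfg \<Lambda> \<psi> \<phi>)) \<in> borel_measurable (leb_on \<Lambda>)"
  unfolding dirichlet_def by (rule borel_measurable_bond_energy) measurable

lemma integrable_exp_neg_sq:
  assumes "a > 0"
  shows "integrable lborel (\<lambda>s::real. exp (- a * s\<^sup>2))"
proof -
  define \<sigma> where "\<sigma> = sqrt (1 / (2 * a))"
  have "\<sigma> > 0" and \<sigma>2: "\<sigma>\<^sup>2 = 1 / (2 * a)" using assms by (simp_all add: \<sigma>_def)
  have "exp (- a * s\<^sup>2) = sqrt (2 * pi * \<sigma>\<^sup>2) * normal_density 0 \<sigma> s" for s
    using assms \<open>\<sigma> > 0\<close> unfolding normal_density_def \<sigma>2 by (simp add: field_simps)
  then show ?thesis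
    using \<open>\<sigma> > 0\<close> by (simp only:) (intro integrable_mult_right integrable_normal_density)
qed

text \<open>By the Poincar\'e inequality the Gaussian weight is dominated by a product of
  one-dimensional Gaussians.\<close>
lemma integrable_gaussian:
  fixes \<Lambda> :: "'d::finite site set"
  assumes fin: "finite \<Lambda>" and c: "c > 0"
  shows "integrable (leb_on \<Lambda>) (\<lambda>\<phi>. exp (- c * dirichlet \<Lambda> (ext_cfg \<Lambda> (\<lambda>_. 0) \<phi>)))"
proof -
  interpret product_sigma_finite "\<lambda>_::'d site. lborel :: real measure" by standard
  define K where "K = real (card \<Lambda>) * 4 ^ Suc (card \<Lambda>) + 1"
  define a where "a = c / K"
  have K: "K > 0" and a: "a > 0" using c by (simp_all add: K_def a_def add_nonneg_pos)
  have dom: "integrable (leb_on \<Lambda>) (\<lambda>\<phi>. \<Prod>x\<in>\<Lambda>. exp (- a * (\<phi> x)\<^sup>2))"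
    using integrable_exp_neg_sq[OF a] by (intro product_integrable_prod fin) auto
  show ?thesis
  proof (rule Bochner_Integration.integrable_bound[OF dom], measurable, intro AE_I2)
    fix \<phi>
    define \<zeta> where "\<zeta> = ext_cfg \<Lambda> (\<lambda>_. 0) \<phi>"
    have "(\<Sum>x\<in>\<Lambda>. (\<phi> x)\<^sup>2) = (\<Sum>x\<in>\<Lambda>. (\<zeta> x)\<^sup>2)" by (simp add: \<zeta>_def ext_cfg_def)
    also have "\<dots> \<le> real (card \<Lambda>) * 4 ^ Suc (card \<Lambda>) * dirichlet \<Lambda> \<zeta>"
      by (rule sum_sq_le_dirichlet[OF fin]) (simp add: \<zeta>_def ext_cfg_def)
    also have "\<dots> \<le> K * dirichlet \<Lambda> \<zeta>"
      unfolding K_def using dirichlet_nonneg[of \<Lambda> \<zeta>] by (simp add: algebra_simps)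
    finally have "a * (\<Sum>x\<in>\<Lambda>. (\<phi> x)\<^sup>2) \<le> c * dirichlet \<Lambda> \<zeta>"
      using a K by (simp add: a_def field_simps)
    moreover have "(\<Sum>x\<in>\<Lambda>. - a * (\<phi> x)\<^sup>2) = - (a * (\<Sum>x\<in>\<Lambda>. (\<phi> x)\<^sup>2))"
      by (simp add: sum_distrib_left sum_negf)
    ultimately have "- c * dirichlet \<Lambda> \<zeta> \<le> (\<Sum>x\<in>\<Lambda>. - a * (\<phi> x)\<^sup>2)"
      by linarith
    then have "exp (- c * dirichlet \<Lambda> \<zeta>) \<le> (\<Prod>x\<in>\<Lambda>. exp (- a * (\<phi> x)\<^sup>2))"
      by (simp add: exp_sum[OF fin, symmetric])
    then show "norm (exp (- c * dirichlet \<Lambda> \<zeta>)) \<le> norm (\<Prod>x\<in>\<Lambda>. exp (- a * (\<phi> x)\<^sup>2))"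
      by (simp add: prod_nonneg abs_prod)
  qed
qed

definition gauss_pf :: "real \<Rightarrow> 'd::finite site set \<Rightarrow> real" where
  "gauss_pf c \<Lambda> = (\<integral>\<phi>. exp (- c * dirichlet \<Lambda> (ext_cfg \<Lambda> (\<lambda>_. 0) \<phi>)) \<partial>leb_on \<Lambda>)"

lemma sigma_integrand_eq:
  assumes "finite \<Lambda>"
  shows "- (c/2) * (\<Sum>(x, y)\<in>{(x, y). x \<in> \<Lambda> \<and> y \<in> \<Lambda> \<and> nn x y}. (\<phi> x - \<phi> y)\<^sup>2)
           - c * (\<Sum>(x, y)\<in>{(x, y). x \<in> \<Lambda> \<and> y \<in> bdry \<Lambda> \<and> nn x y}. (\<phi> x)\<^sup>2)
         = - c * dirichlet \<Lambda> (ext_cfg \<Lambda> (\<lambda>_. 0) \<phi>)"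
proof -
  have "dirichlet \<Lambda> (ext_cfg \<Lambda> (\<lambda>_. 0) \<phi>)
      = 1/2 * (\<Sum>(x, y)\<in>{(x, y). x \<in> \<Lambda> \<and> y \<in> \<Lambda> \<and> nn x y}. (\<phi> x - \<phi> y)\<^sup>2)
        + (\<Sum>(x, y)\<in>{(x, y). x \<in> \<Lambda> \<and> y \<in> bdry \<Lambda> \<and> nn x y}. (\<phi> x)\<^sup>2)"
    unfolding dirichlet_def bond_energy_interior_boundary[OF assms power2_commute]
    by (intro arg_cong2[where f = "(+)"] arg_cong2[where f = "(*)"] refl sum.cong)
       (auto simp: ext_cfg_def bdry_def)
  then show ?thesis by (simp add: algebra_simps)
qed

lemma ln_gauss_pf:
  assumes "finite \<Lambda>"
  shows "ln (gauss_pf c \<Lambda>) = - real (card \<Lambda>) * sigma c \<Lambda>"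
proof (cases "\<Lambda> = {}")
  case True
  then show ?thesis by (simp add: gauss_pf_def dirichlet_def bond_energy_def bond_pairs_def PiM_empty)
next
  case False
  then have "card \<Lambda> > 0" using assms by (simp add: card_gt_0_iff)
  then show ?thesis
    unfolding sigma_def sigma_integrand_eq[OF assms] gauss_pf_def by simp
qed

definition deviation :: "'d::finite site set \<Rightarrow> ('d site \<Rightarrow> real) \<Rightarrow> ('d site \<Rightarrow> real) \<Rightarrow> 'd site \<Rightarrow> real" where
  "deviation \<Lambda> \<psi> \<phi> x = ext_cfg \<Lambda> \<psi> \<phi> x - \<psi> x"

lemma deviation_outside: "x \<notin> \<Lambda> \<Longrightarrow> deviation \<Lambda> \<psi> \<phi> x = 0"
  by (simp add: deviation_def ext_cfg_def)

lemma deviation_eq_translate: "deviation \<Lambda> \<psi> \<phi> = ext_cfg \<Lambda> (\<lambda>_. 0) (translate \<Lambda> \<psi> \<phi>)"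
  by (auto simp: fun_eq_iff deviation_def ext_cfg_def translate_def)

lemma borel_measurable_dirichlet_deviation[measurable]:
  "(\<lambda>\<phi>. dirichlet \<Lambda> (deviation \<Lambda> \<psi> \<phi>)) \<in> borel_measurable (leb_on \<Lambda>)"
  unfolding dirichlet_def deviation_def by (rule borel_measurable_bond_energy) measurable

lemma integral_gauss_deviation:
  assumes "finite \<Lambda>"
  shows "(\<integral>\<phi>. exp (- c * dirichlet \<Lambda> (deviation \<Lambda> \<psi> \<phi>)) \<partial>leb_on \<Lambda>) = gauss_pf c \<Lambda>"
  unfolding deviation_eq_translate gauss_pf_def using assms by (rule integral_translate) measurable

lemma integrable_gauss_deviation:
  assumes "finite \<Lambda>" and "c > 0"
  shows "integrable (leb_on \<Lambda>) (\<lambda>\<phi>. exp (- c * dirichlet \<Lambda> (deviation \<Lambda> \<psi> \<phi>)))"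
  unfolding deviation_eq_translate
  using assms(1) _ integrable_gaussian[OF assms] by (rule integrable_translate) measurable

lemma bond_energy_sq_tilted_cfg:
  assumes "finite \<Lambda>"
  shows "bond_energy \<Lambda> (\<lambda>x y. (ext_cfg \<Lambda> (psi_tilt u) \<phi> x - ext_cfg \<Lambda> (psi_tilt u) \<phi> y)\<^sup>2)
       = dirichlet \<Lambda> (deviation \<Lambda> (psi_tilt u) \<phi>) + bond_energy \<Lambda> (\<lambda>x y. (sdot (x - y) u)\<^sup>2)"
proof -
  have "ext_cfg \<Lambda> (psi_tilt u) \<phi> x - ext_cfg \<Lambda> (psi_tilt u) \<phi> y
      = deviation \<Lambda> (psi_tilt u) \<phi> x - deviation \<Lambda> (psi_tilt u) \<phi> y + sdot (x - y) u" for x y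
    by (simp add: deviation_def psi_tilt_def sdot_diff)
  moreover have "bond_energy \<Lambda> (\<lambda>x y. (deviation \<Lambda> (psi_tilt u) \<phi> x - deviation \<Lambda> (psi_tilt u) \<phi> y
                                     + sdot (x - y) u)\<^sup>2)
      = dirichlet \<Lambda> (deviation \<Lambda> (psi_tilt u) \<phi>) + bond_energy \<Lambda> (\<lambda>x y. (sdot (x - y) u)\<^sup>2)"
    by (rule bond_energy_tilt[OF assms]) (rule deviation_outside)
  ultimately show ?thesis by simp
qed

lemma Ham_eq_bond_energy:
  assumes fin: "finite \<Lambda>"
    and even: "\<And>x y s. nn x y \<Longrightarrow> V x y (- s) = V x y s"
    and sym: "\<And>x y. nn x y \<Longrightarrow> V x y = V y x"
  shows "Ham V \<Lambda> \<psi> \<phi> = bond_energy \<Lambda> (\<lambda>x y. V x y (ext_cfg \<Lambda> \<psi> \<phi> x - ext_cfg \<Lambda> \<psi> \<phi> y))"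
proof -
  let ?g = "\<lambda>x y. V x y (ext_cfg \<Lambda> \<psi> \<phi> x - ext_cfg \<Lambda> \<psi> \<phi> y)"
  have "?g x y = ?g y x" if "nn x y" for x y
    using sym[OF that] even[OF that, of "ext_cfg \<Lambda> \<psi> \<phi> y - ext_cfg \<Lambda> \<psi> \<phi> x"] by simp
  then have "bond_energy \<Lambda> ?g = 1/2 * (\<Sum>(x, y)\<in>{(x, y). x \<in> \<Lambda> \<and> y \<in> \<Lambda> \<and> nn x y}. ?g x y)
                             + (\<Sum>(x, y)\<in>{(x, y). x \<in> \<Lambda> \<and> y \<in> bdry \<Lambda> \<and> nn x y}. ?g x y)"
    by (rule bond_energy_interior_boundary[OF fin])
  also have "\<dots> = Ham V \<Lambda> \<psi> \<phi>"
    unfolding Ham_def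
    by (intro arg_cong2[where f = "(+)"] arg_cong2[where f = "(*)"] refl sum.cong)
       (auto simp: ext_cfg_def bdry_def)
  finally show ?thesis ..
qed

lemma borel_measurable_Ham:
  fixes \<Lambda> :: "'d::finite site set"
  assumes fin: "finite \<Lambda>"
    and cont: "\<And>x y. nn x y \<Longrightarrow> continuous_on UNIV (V x y)"
    and even: "\<And>x y s. nn x y \<Longrightarrow> V x y (- s) = V x y s"
    and sym: "\<And>x y. nn x y \<Longrightarrow> V x y = V y x"
  shows "(\<lambda>\<phi>. Ham V \<Lambda> \<psi> \<phi>) \<in> borel_measurable (leb_on \<Lambda>)"
proof -
  have "(\<lambda>\<phi>. bond_energy \<Lambda> (\<lambda>x y. V x y (ext_cfg \<Lambda> \<psi> \<phi> x - ext_cfg \<Lambda> \<psi> \<phi> y)))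
          \<in> borel_measurable (leb_on \<Lambda>)"
  proof (rule borel_measurable_bond_energy)
    fix x y :: "'d site" assume "nn x y"
    then have "V x y \<in> borel_measurable borel"
      using cont by (intro borel_measurable_continuous_onI) auto
    then show "(\<lambda>\<phi>. V x y (ext_cfg \<Lambda> \<psi> \<phi> x - ext_cfg \<Lambda> \<psi> \<phi> y)) \<in> borel_measurable (leb_on \<Lambda>)"
      by measurable
  qed
  moreover have "Ham V \<Lambda> \<psi> \<phi> = bond_energy \<Lambda> (\<lambda>x y. V x y (ext_cfg \<Lambda> \<psi> \<phi> x - ext_cfg \<Lambda> \<psi> \<phi> y))" for \<phi>
    by (rule Ham_eq_bond_energy[OF fin]) (use even sym in auto)
  ultimately show ?thesis by simp
qed

lemma Ffun_eq_ln_ratio: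
  assumes "finite \<Lambda>"
  shows "Ffun V \<beta> u \<Lambda>
       = ln ((\<integral>\<phi>. exp (- Ham V \<Lambda> (psi_tilt u) \<phi>) * exp (\<beta> * dirichlet \<Lambda> (deviation \<Lambda> (psi_tilt u) \<phi>)) \<partial>leb_on \<Lambda>)
             / (\<integral>\<phi>. exp (- Ham V \<Lambda> (psi_tilt u) \<phi>) \<partial>leb_on \<Lambda>))"
proof -
  have "ext_cfg \<Lambda> (psi_tilt u) \<phi> x - ext_cfg \<Lambda> (psi_tilt u) \<phi> y - sdot (x - y) u
      = deviation \<Lambda> (psi_tilt u) \<phi> x - deviation \<Lambda> (psi_tilt u) \<phi> y" for \<phi> x y
    by (simp add: deviation_def psi_tilt_def sdot_diff)
  then show ?thesis
    unfolding Ffun_def Let_def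
    by (simp add: infsum_nn_pairs_eq_dirichlet[OF assms deviation_outside])
qed

section \<open>The free-energy bound\<close>

lemma Ffun_le_bond_energy:
  fixes V :: "'d::finite site \<Rightarrow> 'd site \<Rightarrow> real \<Rightarrow> real" and B :: "'d site \<Rightarrow> 'd site \<Rightarrow> real"
  assumes fin: "finite \<Lambda>"
    and cont: "\<And>x y. nn x y \<Longrightarrow> continuous_on UNIV (V x y)"
    and even: "\<And>x y s. nn x y \<Longrightarrow> V x y (- s) = V x y s"
    and sym: "\<And>x y. nn x y \<Longrightarrow> V x y = V y x"
    and bounds: "\<And>x y s. nn x y \<Longrightarrow> A * s\<^sup>2 - B x y \<le> V x y s \<and> V x y s \<le> C2 * s\<^sup>2"
    and "C2 > 0" and "0 < \<beta>" and "\<beta> < A"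
  shows "Ffun V \<beta> u \<Lambda> \<le> bond_energy \<Lambda> B + (C2 - A) * bond_energy \<Lambda> (\<lambda>x y. (sdot (x - y) u)\<^sup>2)
                         + ln (gauss_pf (A - \<beta>) \<Lambda>) - ln (gauss_pf C2 \<Lambda>)"
proof -
  define Q where "Q \<phi> = dirichlet \<Lambda> (deviation \<Lambda> (psi_tilt u) \<phi>)" for \<phi>
  define Cu where "Cu = bond_energy \<Lambda> (\<lambda>x y. (sdot (x - y) u)\<^sup>2)"
  define d where "d \<phi> x y = ext_cfg \<Lambda> (psi_tilt u) \<phi> x - ext_cfg \<Lambda> (psi_tilt u) \<phi> y" for \<phi> x y
  have H: "Ham V \<Lambda> (psi_tilt u) \<phi> = bond_energy \<Lambda> (\<lambda>x y. V x y (d \<phi> x y))" for \<phi>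
    unfolding d_def by (rule Ham_eq_bond_energy[OF fin]) (use even sym in auto)
  have sq: "bond_energy \<Lambda> (\<lambda>x y. (d \<phi> x y)\<^sup>2) = Q \<phi> + Cu" for \<phi>
    unfolding d_def Q_def Cu_def by (rule bond_energy_sq_tilted_cfg[OF fin])
  have "A * Q \<phi> - (bond_energy \<Lambda> B - A * Cu) = bond_energy \<Lambda> (\<lambda>x y. A * (d \<phi> x y)\<^sup>2 - B x y)" for \<phi>
    by (simp add: bond_energy_diff bond_energy_cmult sq algebra_simps)
  also have "\<dots> \<phi> \<le> Ham V \<Lambda> (psi_tilt u) \<phi>" for \<phi>
    unfolding H using bounds by (intro bond_energy_mono) auto
  finally have lower: "A * Q \<phi> - (bond_energy \<Lambda> B - A * Cu) \<le> Ham V \<Lambda> (psi_tilt u) \<phi>" for \<phi> .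
  have "Ham V \<Lambda> (psi_tilt u) \<phi> \<le> bond_energy \<Lambda> (\<lambda>x y. C2 * (d \<phi> x y)\<^sup>2)" for \<phi>
    unfolding H using bounds by (intro bond_energy_mono) auto
  then have upper: "Ham V \<Lambda> (psi_tilt u) \<phi> \<le> C2 * Q \<phi> + C2 * Cu" for \<phi>
    by (simp add: bond_energy_cmult sq algebra_simps)
  have "Ffun V \<beta> u \<Lambda> \<le> (bond_energy \<Lambda> B - A * Cu) + C2 * Cu
          + ln (\<integral>\<phi>. exp (- (A - \<beta>) * Q \<phi>) \<partial>leb_on \<Lambda>) - ln (\<integral>\<phi>. exp (- C2 * Q \<phi>) \<partial>leb_on \<Lambda>)"
    unfolding Ffun_eq_ln_ratio[OF fin] Q_def[symmetric]
  proof (rule ln_tilted_ratio_le[OF emeasure_space_leb_on_ne_0[OF fin] _ _ _ _ lower upper])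
    show "(\<lambda>\<phi>. Ham V \<Lambda> (psi_tilt u) \<phi>) \<in> borel_measurable (leb_on \<Lambda>)"
      by (rule borel_measurable_Ham[OF fin]) (use cont even sym in auto)
    show "integrable (leb_on \<Lambda>) (\<lambda>\<phi>. exp (- (A - \<beta>) * Q \<phi>))"
      "integrable (leb_on \<Lambda>) (\<lambda>\<phi>. exp (- C2 * Q \<phi>))"
      unfolding Q_def using assms by (intro integrable_gauss_deviation[OF fin]; simp)+
  qed (use assms in \<open>auto simp: Q_def dirichlet_nonneg\<close>)
  then show ?thesis
    unfolding Q_def integral_gauss_deviation[OF fin] Cu_def by (simp add: algebra_simps)
qed

lemma le_of_quadratic_bound:
  fixes a b c :: real
  assumes "\<And>s. a * s\<^sup>2 - b \<le> c * s\<^sup>2"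
  shows "a \<le> c"
proof (rule ccontr)
  assume "\<not> a \<le> c"
  define s where "s = sqrt ((\<bar>b\<bar> + 1) / (a - c))"
  have "(a - c) * s\<^sup>2 = \<bar>b\<bar> + 1" using \<open>\<not> a \<le> c\<close> by (simp add: s_def)
  then show False using assms[of s] by (simp add: algebra_simps)
qed

lemma C2_fun_continuous_on: "C2_fun f \<Longrightarrow> continuous_on UNIV f"
  unfolding C2_fun_def by (metis DERIV_isCont continuous_at_imp_continuous_on)

lemma potential_bounds_consequences:
  fixes V :: "'d::finite site \<Rightarrow> 'd site \<Rightarrow> real \<Rightarrow> real"
  assumes bounds: "\<And>x y s. nn x y \<Longrightarrow> A * s\<^sup>2 - B x y \<le> V x y s \<and> V x y s \<le> C2 * s\<^sup>2"
  shows "A \<le> C2" and "nn x y \<Longrightarrow> 0 \<le> B x y"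
proof -
  obtain x y :: "'d site" where "nn x y" using nn_add_axis by blast
  then have "A * s\<^sup>2 - B x y \<le> V x y s" "V x y s \<le> C2 * s\<^sup>2" for s
    using bounds by blast+
  then have "A * s\<^sup>2 - B x y \<le> C2 * s\<^sup>2" for s by (meson order_trans)
  then show "A \<le> C2" by (rule le_of_quadratic_bound)
next
  assume "nn x y"
  then have "A * 0\<^sup>2 - B x y \<le> V x y 0 \<and> V x y 0 \<le> C2 * 0\<^sup>2" by (rule bounds)
  then show "0 \<le> B x y" by simp
qed

lemma Ffun_le_surface_tension:
  fixes V :: "'d::finite site \<Rightarrow> 'd site \<Rightarrow> real \<Rightarrow> real" and B :: "'d site \<Rightarrow> 'd site \<Rightarrow> real"
  assumes fin: "finite \<Lambda>"
    and cont: "\<And>x y. nn x y \<Longrightarrow> continuous_on UNIV (V x y)"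
    and even: "\<And>x y s. nn x y \<Longrightarrow> V x y (- s) = V x y s"
    and sym: "\<And>x y. nn x y \<Longrightarrow> V x y = V y x"
    and bounds: "\<And>x y s. nn x y \<Longrightarrow> A * s\<^sup>2 - B x y \<le> V x y s \<and> V x y s \<le> C2 * s\<^sup>2"
    and "C2 > 0" and \<beta>: "0 < \<beta>" "\<beta> < A"
  shows "Ffun V \<beta> u \<Lambda>
           \<le> - real (card \<Lambda>) * (sigma (A - \<beta>) \<Lambda> - sigma C2 \<Lambda>)
             + (\<Sum>(x, y)\<in>{(x, y). x \<in> \<Lambda> \<union> bdry \<Lambda> \<and> y \<in> \<Lambda> \<union> bdry \<Lambda> \<and> nn x y}. B x y)
             - (A - \<beta> - C2) / 2 *
               (\<Sum>(x, y)\<in>{(x, y). x \<in> \<Lambda> \<union> bdry \<Lambda> \<and> y \<in> \<Lambda> \<union> bdry \<Lambda> \<and> nn x y}. (sdot (x - y) u)\<^sup>2)"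
proof -
  define FullB FullC where
    "FullB = (\<Sum>(x, y)\<in>{(x, y). x \<in> \<Lambda> \<union> bdry \<Lambda> \<and> y \<in> \<Lambda> \<union> bdry \<Lambda> \<and> nn x y}. B x y)"
    and "FullC = (\<Sum>(x, y)\<in>{(x, y). x \<in> \<Lambda> \<union> bdry \<Lambda> \<and> y \<in> \<Lambda> \<union> bdry \<Lambda> \<and> nn x y}. (sdot (x - y) u)\<^sup>2)"
  define Cu where "Cu = bond_energy \<Lambda> (\<lambda>x y. (sdot (x - y) u)\<^sup>2)"
  have "Ffun V \<beta> u \<Lambda> \<le> bond_energy \<Lambda> B + (C2 - A) * Cu + ln (gauss_pf (A - \<beta>) \<Lambda>) - ln (gauss_pf C2 \<Lambda>)"
    unfolding Cu_def by (rule Ffun_le_bond_energy) (use assms in auto)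
  moreover have "1 * bond_energy \<Lambda> B \<le> 2 / 2 * FullB"
    unfolding FullB_def
    by (rule mult_bond_energy_le_sum[OF fin]) (auto intro: potential_bounds_consequences(2)[OF bounds])
  moreover have "(C2 - A) * Cu \<le> (C2 - A + \<beta>) / 2 * FullC"
    unfolding Cu_def FullC_def using potential_bounds_consequences(1)[OF bounds] \<beta>
    by (intro mult_bond_energy_le_sum[OF fin]) auto
  moreover have "- real (card \<Lambda>) * (sigma (A - \<beta>) \<Lambda> - sigma C2 \<Lambda>)
      = ln (gauss_pf (A - \<beta>) \<Lambda>) - ln (gauss_pf C2 \<Lambda>)"
    by (simp add: ln_gauss_pf[OF fin] algebra_simps)
  moreover have "- (A - \<beta> - C2) / 2 * FullC = (C2 - A + \<beta>) / 2 * FullC"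
    by (simp add: algebra_simps)
  ultimately show ?thesis unfolding FullB_def[symmetric] FullC_def[symmetric] by linarith
qed

theorem lemma4p1:
  fixes V :: "'w \<Rightarrow> 'd::finite site \<Rightarrow> 'd site \<Rightarrow> real \<Rightarrow> real"
    and B :: "'w \<Rightarrow> 'd site \<Rightarrow> 'd site \<Rightarrow> real"
    and A C2 :: real and u :: "real ^ 'd"
  assumes "A > 0" and "C2 > 0"
    and "\<And>\<omega> x y. nn x y \<Longrightarrow> C2_fun (V \<omega> x y)"
    and "\<And>\<omega> x y s. nn x y \<Longrightarrow> V \<omega> x y (- s) = V \<omega> x y s"
    and "\<And>\<omega> x y. nn x y \<Longrightarrow> V \<omega> x y = V \<omega> y x"
    and "\<And>\<omega> x y. nn x y \<Longrightarrow> B \<omega> x y = B \<omega> y x"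
  shows "\<exists>\<beta>0>0. \<forall>\<beta>. 0 < \<beta> \<and> \<beta> < \<beta>0 \<longrightarrow>
           (\<forall>\<Lambda> \<omega>. finite \<Lambda> \<longrightarrow>
             (\<forall>x y s. nn x y \<longrightarrow> A * s\<^sup>2 - B \<omega> x y \<le> V \<omega> x y s \<and> V \<omega> x y s \<le> C2 * s\<^sup>2) \<longrightarrow>
             Ffun (V \<omega>) \<beta> u \<Lambda>
               \<le> - real (card \<Lambda>) * (sigma (A - \<beta>) \<Lambda> - sigma C2 \<Lambda>)
                 + (\<Sum>(x,y)\<in>{(x,y). x \<in> \<Lambda> \<union> bdry \<Lambda> \<and> y \<in> \<Lambda> \<union> bdry \<Lambda> \<and> nn x y}. B \<omega> x y)
                 - (A - \<beta> - C2) / 2 *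
                   (\<Sum>(x,y)\<in>{(x,y). x \<in> \<Lambda> \<union> bdry \<Lambda> \<and> y \<in> \<Lambda> \<union> bdry \<Lambda> \<and> nn x y}. (sdot (x - y) u)\<^sup>2))"
  using assms C2_fun_continuous_on
  by (intro exI[of _ A] conjI allI impI Ffun_le_surface_tension) auto

end
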